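(* There exist topological spaces $K_1, K_2, K_3$, a continuous map $f: K_1 \to K_2$, and closed subsets $R \subseteq K_1 \times K_3$, $S \subseteq K_2 \times K_3$ such that $$\overline{f_!}(R \cap f^*S) \neq \overline{f_!}R \cap S,$$ where $\overline{f_!}T := \mathrm{cl}(f_!T)$ denotes the closure in $K_2 \times K_3$ of the pushforward.
   Context: For a map $f: A \to B$ and relations $T \subseteq A \times C$, $U \subseteq B \times C$: $f_!T = \{(y,z) \in B \times C : \exists x \in A,\ f(x) = y,\ (x,z) \in T\}$ and $f^*U = \{(x,z) \in A \times C : (f(x), z) \in U\}$. Spaces need not be compact (e.g. the paper's setting allows $K_1$ non-closed in a simplex). *)

theory Defs
  imports "HOL-Analysis.Analysis"
begin

definition rel_push :: "('a \<Rightarrow> 'b) \<Rightarrow> ('a \<times> 'c) set \<Rightarrow> ('b \<times> 'c) set" where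
  "rel_push f T = {(y, z). \<exists>x. f x = y \<and> (x, z) \<in> T}"

definition rel_pull :: "'a set \<Rightarrow> ('a \<Rightarrow> 'b) \<Rightarrow> ('b \<times> 'c) set \<Rightarrow> ('a \<times> 'c) set" where
  "rel_pull A f U = {(x, z). x \<in> A \<and> (f x, z) \<in> U}"

end

theory Submission
  imports Defs
begin

text \<open>Pushforward along a continuous map need not preserve closedness. For the inclusion of a
  non-closed subspace \<open>A\<close> of \<open>X\<close> and a point \<open>a \<in> cl A - A\<close>, the relation \<open>A \<times> {c}\<close> is
  closed in \<open>A \<times> Y\<close> and misses the pullback of \<open>{(a, c)}\<close>, yet the closure of its pushforward
  contains \<open>(a, c)\<close>.\<close>

lemma rel_push_id [simp]: "rel_push id T = T"
  by (auto simp: rel_push_def)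

lemma rel_pull_id: "rel_pull A id U = U \<inter> (A \<times> UNIV)"
  by (auto simp: rel_pull_def)

lemma closedin_subtopology_Times_singleton:
  assumes "A \<subseteq> topspace X" "closedin Y {c}"
  shows "closedin (prod_topology (subtopology X A) Y) (A \<times> {c})"
proof -
  have "closedin (subtopology X A) A"
    by (metis assms(1) closedin_topspace topspace_subtopology_subset)
  then show ?thesis
    using assms(2) by (simp add: closedin_prod_Times_iff)
qed

lemma closure_of_rel_push_inter_rel_pull_neq:
  assumes "A \<subseteq> topspace X" "a \<in> X closure_of A" "a \<notin> A" "c \<in> topspace Y"
  shows "prod_topology X Y closure_of
           rel_push id (A \<times> {c} \<inter> rel_pull (topspace (subtopology X A)) id {(a, c)})
         \<noteq> (prod_topology X Y closure_of rel_push id (A \<times> {c})) \<inter> {(a, c)}"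
proof -
  have "A \<times> {c} \<inter> rel_pull (topspace (subtopology X A)) id {(a, c)} = {}"
    using assms(3) by (auto simp: rel_pull_id)
  moreover have "(a, c) \<in> prod_topology X Y closure_of (A \<times> {c})"
    using assms(2,4) closure_of_subset[of "{c}" Y] by (simp add: closure_of_Times)
  ultimately show ?thesis
    by simp
qed

theorem mainTheorem10:
  shows "\<exists>(K1 :: real topology) (K2 :: real topology) (K3 :: real topology)
            (f :: real \<Rightarrow> real) R S.
           continuous_map K1 K2 f \<and>
           closedin (prod_topology K1 K3) R \<and>
           closedin (prod_topology K2 K3) S \<and>
           (prod_topology K2 K3) closure_of (rel_push f (R \<inter> rel_pull (topspace K1) f S))
             \<noteq> ((prod_topology K2 K3) closure_of (rel_push f R)) \<inter> S"
proof -
  let ?A = "{0<..} :: real set"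
  have "(0::real) \<in> euclideanreal closure_of ?A"
    by (simp add: euclidean_closure_of)
  then have "prod_topology euclideanreal euclideanreal closure_of
      rel_push id (?A \<times> {0} \<inter> rel_pull (topspace (subtopology euclideanreal ?A)) id {(0, 0)})
    \<noteq> (prod_topology euclideanreal euclideanreal closure_of rel_push id (?A \<times> {0})) \<inter> {(0, 0)}"
    by (intro closure_of_rel_push_inter_rel_pull_neq) auto
  moreover have "closedin (prod_topology (subtopology euclideanreal ?A) euclideanreal) (?A \<times> {0})"
    by (rule closedin_subtopology_Times_singleton) simp_all
  moreover have "closedin (prod_topology euclideanreal euclideanreal) {(0::real, 0::real)}"
    by simp
  ultimately show ?thesis
    using continuous_map_id_subt by blast
qed

end
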